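(* If $L$ is a homogeneous second-order Lagrangian on $\mathcal F^2_{(2)}E$, then $L=\tfrac12 i_i\vartheta^i$ (sum over $i\in\{1,2\}$), where $\vartheta^i$ are its Hilbert forms.
   Context: Let $E$ be a smooth manifold of dimension $n$ with local coordinates $(u^\alpha)$. For $k\ge 1$, $\mathcal F^k_{(2)}E$ denotes the bundle of $k$-th order 2-frames in $E$ (regular $k$-th order 2-velocities, i.e. $k$-jets at $0$ of maps $\mathbb R^2\to E$ of rank 2 at $0$), with induced coordinates $u^\alpha_{i_1\cdots i_s}$ ($0\le s\le k$, indices in $\{1,2\}$, totally symmetric in the subscripts). Pull-backs along the projections $\mathcal F^l_{(2)}E\to\mathcal F^k_{(2)}E$ are omitted. $\#(i_1\cdots i_s)$ denotes the number of distinct rearrangements of $(i_1,\dots,i_s)$; repeated indices in $\{1,2\}$ are summed. The total derivatives are the vector fields along $\mathcal F^{k+1}_{(2)}E\to\mathcal F^k_{(2)}E$ given by $\mathbf T_i=\sum_{s=0}^k \frac{1}{\#(i_1\cdots i_s)}u^\alpha_{i i_1\cdots i_s}\,\partial/\partial u^\alpha_{i_1\cdots i_s}$, and the vertical endomorphisms are the type $(1,1)$ tensor fields on $\mathcal F^{k+1}_{(2)}E$ given by $S^j=\sum_{s=0}^k \frac{s+1}{\#(i_1\cdots i_s)}\,\partial/\partial u^\alpha_{j i_1\cdots i_s}\otimes du^\alpha_{i_1\cdots i_s}$. The $S^i$ commute and $S^{i_1\cdots i_s}$ denotes their composite. On forms, $S^i$ acts as the degree-zero derivation $(S^i\omega)(X_1,\dots,X_r)=\sum_a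 \omega(X_1,\dots,S^iX_a,\dots,X_r)$ (zero on functions). The fundamental vector fields are $\Delta^{i_1\cdots i_s}_i=S^{i_1\cdots i_s}(\mathbf T_i)$, well-defined vector fields on $\mathcal F^{k+1}_{(2)}E$. Contraction with $\mathbf T_i$ and with $\Delta^{i_1\cdots i_s}_i$ is denoted $i_i$ and $i^{i_1\cdots i_s}_i$; the corresponding Lie derivatives are $d_i=d\,i_i+i_i\,d$ and $d^{i_1\cdots i_s}_i=d\,i^{i_1\cdots i_s}_i+i^{i_1\cdots i_s}_i d$. The $d_i$ commute and $d_{j_1\cdots j_s}$ denotes their composite. A second-order Lagrangian is a smooth function $L$ on (an open subset of) $\mathcal F^2_{(2)}E$; it is homogeneous if $d^i_jL=\delta^i_jL$ and $d^{ik}_jL=0$ for all $i,j,k$. Its Hilbert forms are the 1-forms $\vartheta^i=(S^i-\tfrac12 d_jS^{ji})\,dL$ on $\mathcal F^3_{(2)}E$. *)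

theory Defs
  imports "HOL-Analysis.Analysis"
begin

text \<open>Coordinate model of the (infinite) tower of 2-frame bundles over a coordinate
chart of E.  The fibre coordinate index 'a (a finite type) labels the coordinates u^alpha
of E (n = CARD('a)).  A symmetric multi-index (i_1 ... i_s) over {1,2} is encoded by
(p,q) = (number of 1's, number of 2's).  A point is a function assigning to every
coordinate (alpha,p,q) the value of u^alpha_{1^p 2^q}.  Objects living on F^k are
functions depending only on coordinates of order at most k.\<close>

type_synonym 'a coord = "'a \<times> nat \<times> nat"
type_synonym 'a point = "'a coord \<Rightarrow> real"

definition ord :: "'a coord \<Rightarrow> nat" where
  "ord c = (case c of (\<alpha>, p, q) \<Rightarrow> p + q)"

definition shift :: "nat \<Rightarrow> 'a coord \<Rightarrow> 'a coord" where
  "shift j c = (case c of (\<alpha>, p, q) \<Rightarrow> if j = 1 then (\<alpha>, Suc p, q) else (\<alpha>, p, Suc q))"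

text \<open>sum over all coordinates (only finitely many nonzero terms occur)\<close>
definition csum :: "('a coord \<Rightarrow> real) \<Rightarrow> real" where
  "csum g = sum g {c. g c \<noteq> 0}"

definition pd :: "'a coord \<Rightarrow> ('a point \<Rightarrow> real) \<Rightarrow> 'a point \<Rightarrow> real" where
  "pd c f x = deriv (\<lambda>t. f (x(c := t))) (x c)"

fun pds :: "'a coord list \<Rightarrow> ('a point \<Rightarrow> real) \<Rightarrow> 'a point \<Rightarrow> real" where
  "pds [] f = f"
| "pds (c # cs) f = pd c (pds cs f)"

definition smooth_on :: "'a point set \<Rightarrow> ('a point \<Rightarrow> real) \<Rightarrow> bool" where
  "smooth_on U f \<longleftrightarrow> (\<forall>cs. continuous_on U (pds cs f) \<and>
     (\<forall>c. \<forall>x\<in>U. (\<lambda>t. pds cs f (x(c := t))) differentiable (at (x c))))"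

definition depends_on_order :: "nat \<Rightarrow> ('a point \<Rightarrow> 'b) \<Rightarrow> bool" where
  "depends_on_order k f \<longleftrightarrow> (\<forall>x y. (\<forall>c. ord c \<le> k \<longrightarrow> x c = y c) \<longrightarrow> f x = f y)"

definition regular :: "'a point \<Rightarrow> bool" where
  "regular x \<longleftrightarrow> (\<forall>a b. (\<forall>\<alpha>. a * x (\<alpha>, 1, 0) + b * x (\<alpha>, 0, 1) = 0) \<longrightarrow> a = 0 \<and> b = 0)"

type_synonym 'a vfield = "'a point \<Rightarrow> 'a coord \<Rightarrow> real"
type_synonym 'a form1 = "'a point \<Rightarrow> 'a coord \<Rightarrow> real"
type_synonym 'a form2 = "'a point \<Rightarrow> 'a coord \<Rightarrow> 'a coord \<Rightarrow> real"

text \<open>total derivative T_i = sum u_{iI} d/du_I\<close>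
definition Tot :: "nat \<Rightarrow> 'a vfield" where
  "Tot i x c = x (shift i c)"

text \<open>vertical endomorphism S^j = sum (s+1) d/du_{jI} (x) du_I, as a matrix
  (coefficient of d/du_{c'} (x) du_c)\<close>
definition Smat :: "nat \<Rightarrow> 'a coord \<Rightarrow> 'a coord \<Rightarrow> real" where
  "Smat j c' c = (if c' = shift j c then real (ord c + 1) else 0)"

definition S_vec :: "nat \<Rightarrow> 'a vfield \<Rightarrow> 'a vfield" where
  "S_vec j X x c' = csum (\<lambda>c. Smat j c' c * X x c)"

definition S_form :: "nat \<Rightarrow> 'a form1 \<Rightarrow> 'a form1" where
  "S_form j \<omega> x c = csum (\<lambda>c'. \<omega> x c' * Smat j c' c)"

definition dfun :: "('a point \<Rightarrow> real) \<Rightarrow> 'a form1" where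
  "dfun f x c = pd c f x"

definition dform1 :: "'a form1 \<Rightarrow> 'a form2" where
  "dform1 \<omega> x a b = pd a (\<lambda>y. \<omega> y b) x - pd b (\<lambda>y. \<omega> y a) x"

definition contr1 :: "'a vfield \<Rightarrow> 'a form1 \<Rightarrow> 'a point \<Rightarrow> real" where
  "contr1 X \<omega> x = csum (\<lambda>c. \<omega> x c * X x c)"

definition contr2 :: "'a vfield \<Rightarrow> 'a form2 \<Rightarrow> 'a form1" where
  "contr2 X \<theta> x b = csum (\<lambda>a. X x a * \<theta> x a b)"

definition lie_fun :: "'a vfield \<Rightarrow> ('a point \<Rightarrow> real) \<Rightarrow> 'a point \<Rightarrow> real" where
  "lie_fun X f = contr1 X (dfun f)"

text \<open>Lie derivative of a 1-form along X: d i_X + i_X d\<close>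
definition lie_form :: "'a vfield \<Rightarrow> 'a form1 \<Rightarrow> 'a form1" where
  "lie_form X \<omega> x b = dfun (contr1 X \<omega>) x b + contr2 X (dform1 \<omega>) x b"

definition Delta1 :: "nat \<Rightarrow> nat \<Rightarrow> 'a vfield" where
  "Delta1 i j = S_vec i (Tot j)"

definition Delta2 :: "nat \<Rightarrow> nat \<Rightarrow> nat \<Rightarrow> 'a vfield" where
  "Delta2 i k j = S_vec i (S_vec k (Tot j))"

definition homogeneous_on :: "'a point set \<Rightarrow> ('a point \<Rightarrow> real) \<Rightarrow> bool" where
  "homogeneous_on U L \<longleftrightarrow>
     (\<forall>i\<in>{1,2}. \<forall>j\<in>{1,2}. \<forall>x\<in>U. lie_fun (Delta1 i j) L x = (if i = j then L x else 0)) \<and>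
     (\<forall>i\<in>{1,2}. \<forall>j\<in>{1,2}. \<forall>k\<in>{1,2}. \<forall>x\<in>U. lie_fun (Delta2 i k j) L x = 0)"

definition hilbert_form :: "('a point \<Rightarrow> real) \<Rightarrow> nat \<Rightarrow> 'a form1" where
  "hilbert_form L i x c = S_form i (dfun L) x c
     - (1/2) * (\<Sum>j\<in>{1,2}. lie_form (Tot j) (S_form j (S_form i (dfun L))) x c)"

text \<open>second-order Lagrangian on an open subset U of F^2_{(2)}E (U is the preimage of an
  open set of 2-frames, hence open and determined by coordinates of order <= 2)\<close>
definition second_order_lagrangian :: "'a point set \<Rightarrow> ('a point \<Rightarrow> real) \<Rightarrow> bool" where
  "second_order_lagrangian U L \<longleftrightarrow>
     open U \<and> depends_on_order 2 (\<lambda>x. x \<in> U) \<and> U \<subseteq> {x. regular x} \<and>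
     depends_on_order 2 L \<and> smooth_on U L"

end

theory Submission
  imports Defs
begin

text \<open>Since \<open>S\<^sup>i\<close> acts on 1-forms as the transpose of its action on vectors,
  \<open>i\<^sub>i S\<^sup>i dL = dL(S\<^sup>i T\<^sub>i) = d\<^sup>i\<^sub>i L = L\<close>, so these terms sum to \<open>2 L\<close>.  In
  \<open>d\<^sub>j \<omega>\<^sup>i\<^sup>j = d i\<^sub>j \<omega>\<^sup>i\<^sup>j + i\<^sub>j d\<omega>\<^sup>i\<^sup>j\<close> with \<open>\<omega>\<^sup>i\<^sup>j = S\<^sup>j S\<^sup>i dL\<close>, the first part vanishes because
  \<open>i\<^sub>j \<omega>\<^sup>i\<^sup>j = d\<^sup>i\<^sup>j\<^sub>j L\<close> is zero on the open set \<open>U\<close>; the remaining \<open>\<Sum>\<^sub>i\<^sub>j d\<omega>\<^sup>i\<^sup>j(T\<^sub>j, T\<^sub>i)\<close> is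
  zero because \<open>\<omega>\<^sup>i\<^sup>j\<close> is symmetric in \<open>i, j\<close> while \<open>d\<omega>\<^sup>i\<^sup>j\<close> is alternating.\<close>

definition coords_upto :: "nat \<Rightarrow> 'a coord set" where
  "coords_upto k = {c. ord c \<le> k}"

lemma finite_coords_upto: "finite (coords_upto k :: ('a::finite) coord set)"
proof (rule finite_subset)
  show "coords_upto k \<subseteq> (UNIV :: 'a set) \<times> {..k} \<times> {..k}"
    by (auto simp: coords_upto_def ord_def)
qed simp

lemma csum_eq_sum:
  assumes "finite F" "\<And>c. c \<notin> F \<Longrightarrow> g c = 0"
  shows "csum g = sum g F"
  unfolding csum_def by (rule sum.mono_neutral_left) (use assms in auto)

lemma csum_single: "(\<And>c. c \<noteq> d \<Longrightarrow> g c = 0) \<Longrightarrow> csum g = g d"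
  using csum_eq_sum[of "{d}" g] by auto

lemma inj_shift: "inj (shift k)"
proof (rule injI)
  fix c d :: "'a coord"
  assume "shift k c = shift k d"
  then show "c = d"
    by (cases c; cases d) (auto simp: shift_def split: if_splits)
qed

lemma csum_shift:
  assumes "\<And>c. c \<notin> range (shift k) \<Longrightarrow> g c = 0"
  shows "csum (\<lambda>c. g (shift k c)) = csum g"
proof -
  have "{c. g c \<noteq> 0} = shift k ` {c. g (shift k c) \<noteq> 0}"
  proof
    show "{c. g c \<noteq> 0} \<subseteq> shift k ` {c. g (shift k c) \<noteq> 0}"
    proof
      fix c
      assume "c \<in> {c. g c \<noteq> 0}"
      moreover from this obtain d where "c = shift k d"
        using assms by blast
      ultimately show "c \<in> shift k ` {c. g (shift k c) \<noteq> 0}"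
        by simp
    qed
  qed auto
  then show ?thesis
    unfolding csum_def by (simp add: sum.reindex inj_on_subset[OF inj_shift])
qed

lemma ord_shift [simp]: "ord (shift j c) = Suc (ord c)"
  by (cases c) (auto simp: ord_def shift_def)

lemma shift_commute: "shift i (shift j c) = shift j (shift i c)"
  by (cases c) (auto simp: shift_def)

lemma S_form_apply: "S_form j \<omega> x c = \<omega> x (shift j c) * real (ord c + 1)"
  unfolding S_form_def by (subst csum_single[where d = "shift j c"]) (auto simp: Smat_def)

lemma S_form_commute: "S_form i (S_form j \<omega>) = S_form j (S_form i \<omega>)"
  by (intro ext) (simp add: S_form_apply shift_commute)

lemma S_vec_shift: "S_vec k X x (shift k c) = real (ord c + 1) * X x c"
  unfolding S_vec_def
  by (subst csum_single[where d = c])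
     (auto simp: Smat_def shift_def split: prod.splits if_splits)

lemma S_vec_outside_range:
  assumes "c' \<notin> range (shift k)"
  shows "S_vec k X x c' = 0"
proof -
  have "Smat k c' c = 0" for c
    using assms by (auto simp: Smat_def)
  then show ?thesis
    by (simp add: S_vec_def csum_def)
qed

lemma contr1_S_form: "contr1 X (S_form k \<omega>) x = contr1 (S_vec k X) \<omega> x"
proof -
  have "contr1 (S_vec k X) \<omega> x = csum (\<lambda>c. \<omega> x (shift k c) * S_vec k X x (shift k c))"
    unfolding contr1_def by (rule csum_shift[symmetric]) (simp add: S_vec_outside_range)
  then show ?thesis
    by (simp add: contr1_def S_form_apply S_vec_shift mult_ac)
qed

lemma lie_fun_Delta1: "lie_fun (Delta1 i j) L x = contr1 (Tot j) (S_form i (dfun L)) x"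
  by (simp add: lie_fun_def Delta1_def contr1_S_form)

lemma lie_fun_Delta2:
  "lie_fun (Delta2 i k j) L x = contr1 (Tot j) (S_form k (S_form i (dfun L))) x"
  by (simp add: lie_fun_def Delta2_def contr1_S_form)

lemma contr1_eq_sum:
  "finite F \<Longrightarrow> (\<And>c. c \<notin> F \<Longrightarrow> \<omega> x c = 0) \<Longrightarrow> contr1 X \<omega> x = (\<Sum>c\<in>F. \<omega> x c * X x c)"
  unfolding contr1_def by (rule csum_eq_sum) auto

lemma contr2_eq_sum:
  "finite F \<Longrightarrow> (\<And>a. a \<notin> F \<Longrightarrow> \<theta> x a b = 0) \<Longrightarrow> contr2 X \<theta> x b = (\<Sum>a\<in>F. X x a * \<theta> x a b)"
  unfolding contr2_def by (rule csum_eq_sum) auto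

lemma pd_eq_0_on_open:
  assumes "open U" "x \<in> U" "\<And>y. y \<in> U \<Longrightarrow> f y = 0"
  shows "pd c f x = 0"
proof -
  have "continuous_on UNIV (\<lambda>t::real. x(c := t))"
  proof (rule continuous_on_coordinatewise_then_product)
    fix b
    show "continuous_on UNIV (\<lambda>t::real. (x(c := t)) b)"
      by (cases "b = c") simp_all
  qed
  then have "open ((\<lambda>t. x(c := t)) -` U \<inter> UNIV)"
    using assms(1) continuous_on_open_vimage[of UNIV] by auto
  moreover have "x c \<in> (\<lambda>t. x(c := t)) -` U \<inter> UNIV"
    using assms(2) by simp
  ultimately have "((\<lambda>t. f (x(c := t))) has_field_derivative 0) (at (x c))"
    by (intro has_field_derivative_transform_within_open[OF DERIV_const]) (use assms(3) in auto)
  then show ?thesis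
    unfolding pd_def by (rule DERIV_imp_deriv)
qed

lemma pd_eq_0_if_independent:
  assumes "depends_on_order k f" "k < ord c"
  shows "pd c f x = 0"
proof -
  have "f (x(c := t)) = f x" for t
  proof -
    have "\<forall>c'. ord c' \<le> k \<longrightarrow> (x(c := t)) c' = x c'"
      using assms(2) by auto
    then show ?thesis
      using assms(1) unfolding depends_on_order_def by blast
  qed
  then show ?thesis
    unfolding pd_def by (simp add: DERIV_imp_deriv)
qed

lemma depends_on_order_pd:
  assumes "depends_on_order k f"
  shows "depends_on_order k (pd c f)"
  unfolding depends_on_order_def
proof (intro allI impI)
  fix x y :: "'a point"
  assume agree: "\<forall>c. ord c \<le> k \<longrightarrow> x c = y c"
  show "pd c f x = pd c f y"
  proof (cases "ord c \<le> k")
    case True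
    have "f (x(c := t)) = f (y(c := t))" for t
    proof -
      have "\<forall>c'. ord c' \<le> k \<longrightarrow> (x(c := t)) c' = (y(c := t)) c'"
        using agree by simp
      then show ?thesis
        using assms unfolding depends_on_order_def by blast
    qed
    moreover have "x c = y c"
      using True agree by blast
    ultimately show ?thesis
      unfolding pd_def by simp
  next
    case False
    then show ?thesis
      using pd_eq_0_if_independent[OF assms] by simp
  qed
qed

definition form_of_order :: "nat \<Rightarrow> 'a form1 \<Rightarrow> bool" where
  "form_of_order k \<omega> \<longleftrightarrow>
     (\<forall>c. depends_on_order k (\<lambda>y. \<omega> y c)) \<and> (\<forall>y c. k < ord c \<longrightarrow> \<omega> y c = 0)"

lemma form_of_order_dfun: "depends_on_order k L \<Longrightarrow> form_of_order k (dfun L)"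
  by (simp add: form_of_order_def dfun_def depends_on_order_pd pd_eq_0_if_independent)

lemma form_of_order_S_form:
  fixes \<omega> :: "'a form1"
  assumes "form_of_order k \<omega>"
  shows "form_of_order k (S_form j \<omega>)"
  unfolding form_of_order_def
proof (intro conjI allI impI)
  fix c :: "'a coord"
  have "depends_on_order k (\<lambda>y. \<omega> y (shift j c))"
    using assms unfolding form_of_order_def by blast
  then show "depends_on_order k (\<lambda>y. S_form j \<omega> y c)"
    unfolding depends_on_order_def S_form_apply by metis
next
  fix y and c :: "'a coord"
  assume "k < ord c"
  then have "\<omega> y (shift j c) = 0"
    using assms unfolding form_of_order_def by (metis less_SucI ord_shift)
  then show "S_form j \<omega> y c = 0"
    by (simp add: S_form_apply)
qed

lemma dform1_antisym: "dform1 \<omega> x a b = - dform1 \<omega> x b a"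
  by (simp add: dform1_def)

lemma dform1_eq_0:
  assumes "form_of_order k \<omega>" "k < ord a"
  shows "dform1 \<omega> x a b = 0"
proof -
  have "depends_on_order k (\<lambda>y. \<omega> y b)"
    using assms(1) unfolding form_of_order_def by blast
  then have "pd a (\<lambda>y. \<omega> y b) x = 0"
    using assms(2) by (rule pd_eq_0_if_independent)
  moreover have "pd b (\<lambda>y. \<omega> y a) x = 0"
  proof (rule pd_eq_0_on_open[of UNIV])
    show "\<omega> y a = 0" for y
      using assms unfolding form_of_order_def by blast
  qed simp_all
  ultimately show ?thesis
    by (simp add: dform1_def)
qed

lemma contr2_dform1_eq_0:
  assumes "form_of_order k \<omega>" "k < ord b"
  shows "contr2 X (dform1 \<omega>) x b = 0"
proof -
  have "dform1 \<omega> x a b = 0" for a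
    using dform1_eq_0[OF assms] dform1_antisym by (metis neg_equal_0_iff_equal)
  then show ?thesis
    by (simp add: contr2_def csum_def)
qed

lemma contr1_contr2_dform1_antisym:
  fixes \<omega> :: "('a::finite) form1"
  assumes "form_of_order k \<omega>"
  shows "contr1 X (contr2 Y (dform1 \<omega>)) x = - contr1 Y (contr2 X (dform1 \<omega>)) x"
proof -
  let ?F = "coords_upto k :: 'a coord set"
  have inner: "contr2 W (dform1 \<omega>) x b = (\<Sum>a\<in>?F. W x a * dform1 \<omega> x a b)" for W b
    by (rule contr2_eq_sum[OF finite_coords_upto])
       (simp add: coords_upto_def dform1_eq_0[OF assms])
  have expand: "contr1 V (contr2 W (dform1 \<omega>)) x
      = (\<Sum>b\<in>?F. \<Sum>a\<in>?F. W x a * dform1 \<omega> x a b * V x b)" for V W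
  proof -
    have "contr1 V (contr2 W (dform1 \<omega>)) x = (\<Sum>b\<in>?F. contr2 W (dform1 \<omega>) x b * V x b)"
      by (rule contr1_eq_sum[OF finite_coords_upto])
         (simp add: coords_upto_def contr2_dform1_eq_0[OF assms])
    then show ?thesis
      by (simp add: inner sum_distrib_right)
  qed
  have "(\<Sum>b\<in>?F. \<Sum>a\<in>?F. Y x a * dform1 \<omega> x a b * X x b)
      = (\<Sum>a\<in>?F. \<Sum>b\<in>?F. Y x a * dform1 \<omega> x a b * X x b)"
    by (rule sum.swap)
  also have "\<dots> = (\<Sum>a\<in>?F. \<Sum>b\<in>?F. - (X x b * dform1 \<omega> x b a * Y x a))"
    by (subst dform1_antisym) (simp add: mult_ac)
  also have "\<dots> = - (\<Sum>b\<in>?F. \<Sum>a\<in>?F. X x a * dform1 \<omega> x a b * Y x b)"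
    by (simp add: sum_negf)
  finally show ?thesis
    by (simp add: expand)
qed

lemma sum_contr1_contr2_dform1_symmetric:
  fixes \<omega> :: "nat \<Rightarrow> nat \<Rightarrow> ('a::finite) form1"
  assumes "\<And>i j. form_of_order k (\<omega> i j)" "\<And>i j. \<omega> i j = \<omega> j i"
  shows "(\<Sum>i\<in>I. \<Sum>j\<in>I. contr1 (X i) (contr2 (X j) (dform1 (\<omega> j i))) x) = 0"
proof -
  let ?S = "\<Sum>i\<in>I. \<Sum>j\<in>I. contr1 (X i) (contr2 (X j) (dform1 (\<omega> j i))) x"
  have "?S = (\<Sum>j\<in>I. \<Sum>i\<in>I. contr1 (X i) (contr2 (X j) (dform1 (\<omega> j i))) x)"
    by (rule sum.swap)
  also have "\<dots> = (\<Sum>j\<in>I. \<Sum>i\<in>I. - contr1 (X j) (contr2 (X i) (dform1 (\<omega> i j))) x)"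
  proof (intro sum.cong refl)
    fix j i
    show "contr1 (X i) (contr2 (X j) (dform1 (\<omega> j i))) x
        = - contr1 (X j) (contr2 (X i) (dform1 (\<omega> i j))) x"
      using contr1_contr2_dform1_antisym[OF assms(1)[of j i], of "X i" "X j" x]
      by (simp only: assms(2)[of j i])
  qed
  also have "\<dots> = - ?S"
    by (simp add: sum_negf)
  finally show ?thesis
    by simp
qed

lemma lie_form_eq_contr2_dform1:
  assumes "open U" "x \<in> U" "\<And>y. y \<in> U \<Longrightarrow> contr1 X \<omega> y = 0"
  shows "lie_form X \<omega> x c = contr2 X (dform1 \<omega>) x c"
  using pd_eq_0_on_open[OF assms] by (simp add: lie_form_def dfun_def)

lemma contr1_hilbert_form:
  fixes L :: "('a::finite) point \<Rightarrow> real"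
  assumes "open U" "x \<in> U" "depends_on_order k L"
    and "\<And>j y. j \<in> {1,2} \<Longrightarrow> y \<in> U \<Longrightarrow> lie_fun (Delta2 i j j) L y = 0"
  shows "contr1 (Tot i) (hilbert_form L i) x = lie_fun (Delta1 i i) L x
    - 1/2 * (\<Sum>j\<in>{1,2}. contr1 (Tot i) (contr2 (Tot j) (dform1 (S_form j (S_form i (dfun L))))) x)"
proof -
  let ?F = "coords_upto k :: 'a coord set"
  let ?\<theta> = "\<lambda>j. contr2 (Tot j) (dform1 (S_form j (S_form i (dfun L))))"
  have order: "form_of_order k (S_form i (dfun L))" "form_of_order k (S_form j (S_form i (dfun L)))" for j
    by (intro form_of_order_S_form form_of_order_dfun assms(3))+
  have outside: "S_form i (dfun L) x c = 0" "?\<theta> j x c = 0" if "c \<notin> ?F" for j c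
  proof -
    have "k < ord c"
      using that by (simp add: coords_upto_def)
    then show "S_form i (dfun L) x c = 0" "?\<theta> j x c = 0"
      using order(1) contr2_dform1_eq_0[OF order(2)] unfolding form_of_order_def by blast+
  qed
  have hilbert: "hilbert_form L i x c = S_form i (dfun L) x c - 1/2 * (\<Sum>j\<in>{1,2}. ?\<theta> j x c)" for c
  proof -
    have "lie_form (Tot j) (S_form j (S_form i (dfun L))) x c = ?\<theta> j x c" if "j \<in> {1,2}" for j
      using assms(1,2) by (rule lie_form_eq_contr2_dform1) (use assms(4)[OF that] in \<open>simp add: lie_fun_Delta2\<close>)
    then show ?thesis
      by (simp add: hilbert_form_def)
  qed
  have contr1_outside: "contr1 (Tot i) \<omega> x = (\<Sum>c\<in>?F. \<omega> x c * Tot i x c)"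
    if "\<And>c. c \<notin> ?F \<Longrightarrow> \<omega> x c = 0" for \<omega>
    using finite_coords_upto that by (rule contr1_eq_sum)
  have "contr1 (Tot i) (hilbert_form L i) x = (\<Sum>c\<in>?F. hilbert_form L i x c * Tot i x c)"
    by (rule contr1_outside) (simp add: hilbert outside)
  also have "\<dots> = (\<Sum>c\<in>?F. S_form i (dfun L) x c * Tot i x c)
      - 1/2 * (\<Sum>j\<in>{1,2}. \<Sum>c\<in>?F. ?\<theta> j x c * Tot i x c)"
    by (simp add: hilbert algebra_simps sum_subtractf sum.distrib sum_distrib_left)
  also have "\<dots> = lie_fun (Delta1 i i) L x - 1/2 * (\<Sum>j\<in>{1,2}. contr1 (Tot i) (?\<theta> j) x)"
    by (simp add: lie_fun_Delta1 contr1_outside outside)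
  finally show ?thesis .
qed

theorem proposition1:
  fixes U :: "('a::finite) point set" and L :: "'a point \<Rightarrow> real"
  assumes "second_order_lagrangian U L"
    and "homogeneous_on U L"
  shows "\<forall>x\<in>U. L x = (1/2) * (\<Sum>i\<in>{1,2}. contr1 (Tot i) (hilbert_form L i) x)"
proof
  fix x
  assume x: "x \<in> U"
  have U: "open U" and L: "depends_on_order 2 L"
    using assms(1) by (simp_all add: second_order_lagrangian_def)
  let ?\<omega> = "\<lambda>j i. S_form j (S_form i (dfun L))"
  have Delta1: "lie_fun (Delta1 i i) L x = L x" if "i \<in> {1,2}" for i
    using assms(2) x that unfolding homogeneous_on_def by auto
  have Delta2: "lie_fun (Delta2 i j j) L y = 0" if "i \<in> {1,2}" "j \<in> {1,2}" "y \<in> U" for i j y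
    using assms(2) that unfolding homogeneous_on_def by blast
  have hilbert: "contr1 (Tot i) (hilbert_form L i) x
      = L x - 1/2 * (\<Sum>j\<in>{1,2}. contr1 (Tot i) (contr2 (Tot j) (dform1 (?\<omega> j i))) x)"
    if "i \<in> {1,2}" for i
    using contr1_hilbert_form[OF U x L Delta2[OF that]] Delta1[OF that] by simp
  have symmetric: "(\<Sum>i\<in>{1,2}. \<Sum>j\<in>{1,2}. contr1 (Tot i) (contr2 (Tot j) (dform1 (?\<omega> j i))) x) = 0"
    by (rule sum_contr1_contr2_dform1_symmetric[where k = 2])
      (simp_all add: L form_of_order_S_form form_of_order_dfun S_form_commute)
  have "(\<Sum>i\<in>{1,2}. contr1 (Tot i) (hilbert_form L i) x)
      = (\<Sum>i\<in>{1,2::nat}. L x - 1/2 * (\<Sum>j\<in>{1,2}. contr1 (Tot i) (contr2 (Tot j) (dform1 (?\<omega> j i))) x))"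
    by (intro sum.cong refl hilbert)
  also have "\<dots> = 2 * L x"
    using symmetric by (simp only: sum_subtractf sum_distrib_left[symmetric]) simp
  finally show "L x = (1/2) * (\<Sum>i\<in>{1,2}. contr1 (Tot i) (hilbert_form L i) x)"
    by simp
qed

end
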